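(* Every closed convex set $C\subseteq\mathbb{R}^n$ is $K$-outward minimizing in the ball $B(0,R)$ for every $R>0$.
   Context: Standing assumption: $K:\mathbb{R}^n\setminus\{0\}\to[0,+\infty)$ is measurable, $\min\{1,|x|\}K(x)\in L^1(\mathbb{R}^n)$ and $K(x)=K(-x)$. For measurable $E$ and open $\Omega$, $\mathrm{Per}_K(E,\Omega)=\int_E\int_{\Omega\setminus E}K(x-y)\,dx\,dy+\int_{E\cap\Omega}\int_{\mathbb{R}^n\setminus(\Omega\cup E)}K(x-y)\,dx\,dy$. $A\subset\subset\Omega$ means the closure of $A$ is a compact subset of $\Omega$. A set $E$ is $K$-outward minimizing in $\Omega$ if $\mathrm{Per}_K(E,\Omega)\le\mathrm{Per}_K(F,\Omega)$ for every measurable $F\supseteq E$ with $F\setminus E\subset\subset\Omega$. (It is known, and may be used, that half-spaces $\{x\cdot\nu\ge0\}$ are local minimizers of $\mathrm{Per}_K(\cdot,B(0,R))$ for every $R>0$.) *)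

theory Defs
  imports "HOL-Analysis.Analysis"
begin

definition admissible_kernel :: "('a::euclidean_space \<Rightarrow> real) \<Rightarrow> bool" where
  "admissible_kernel K \<longleftrightarrow>
     K \<in> borel_measurable lebesgue \<and>
     (\<forall>x. x \<noteq> 0 \<longrightarrow> K x \<ge> 0) \<and>
     integrable lebesgue (\<lambda>x. min 1 (norm x) * K x) \<and>
     (\<forall>x. x \<noteq> 0 \<longrightarrow> K (-x) = K x)"

definition perK :: "('a::euclidean_space \<Rightarrow> real) \<Rightarrow> 'a set \<Rightarrow> 'a set \<Rightarrow> ennreal" where
  "perK K E \<Omega> =
     (\<integral>\<^sup>+ x. indicator E x * (\<integral>\<^sup>+ y. indicator (\<Omega> - E) y * ennreal (K (x - y)) \<partial>lebesgue) \<partial>lebesgue)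
   + (\<integral>\<^sup>+ x. indicator (E \<inter> \<Omega>) x *
        (\<integral>\<^sup>+ y. indicator (UNIV - (\<Omega> \<union> E)) y * ennreal (K (x - y)) \<partial>lebesgue) \<partial>lebesgue)"

definition compactly_contained :: "'a::euclidean_space set \<Rightarrow> 'a set \<Rightarrow> bool" where
  "compactly_contained A \<Omega> \<longleftrightarrow> compact (closure A) \<and> closure A \<subseteq> \<Omega>"

definition outward_minimizing :: "('a::euclidean_space \<Rightarrow> real) \<Rightarrow> 'a set \<Rightarrow> 'a set \<Rightarrow> bool" where
  "outward_minimizing K E \<Omega> \<longleftrightarrow>
     (\<forall>F. F \<in> sets lebesgue \<and> E \<subseteq> F \<and> compactly_contained (F - E) \<Omega> \<longrightarrow>
          perK K E \<Omega> \<le> perK K F \<Omega>)"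

end

theory Submission
  imports Defs
begin

text \<open>By Fubini, \<open>Per\<^sub>K(E, \<Omega>) = \<integral> K(z) (|E \<inter> ((\<Omega> - E) + z)| + |E \<inter> \<Omega> \<inter> ((\<Omega> \<union> E)\<^sup>c + z)|) dz\<close>,
  so the perimeters of \<open>C\<close> and \<open>F = C \<union> A\<close> (with \<open>A \<subseteq> \<Omega>\<close> bounded and disjoint from \<open>C\<close>)
  can be compared for each fixed \<open>z\<close>. The difference of the integrands is
  \<open>|A \<inter> (F\<^sup>c + z)| - |C \<inter> (A + z)|\<close>, and it is nonnegative for convex \<open>C\<close>: from a point
  \<open>x \<in> C \<inter> (A + z)\<close> follow the chain \<open>x - z, x - 2z, \<dots>\<close>, which leaves the bounded set \<open>A\<close>.
  Its last point \<open>a\<close> in \<open>A\<close> has \<open>a - z \<notin> A\<close>, and \<open>a - z \<notin> C\<close> because otherwise \<open>x - z\<close>, lying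
  between \<open>x\<close> and \<open>a - z\<close>, would be in \<open>C\<close>. The map \<open>x \<mapsto> a\<close> is injective and a translation on
  each piece of a countable partition, hence measure preserving.\<close>

definition overlap :: "'a::euclidean_space set \<Rightarrow> 'a set \<Rightarrow> 'a \<Rightarrow> ennreal" where
  "overlap X Y z = emeasure lborel (X \<inter> {x. x - z \<in> Y})"

lemma eventually_translates_leave_bounded:
  fixes x z :: "'a::real_normed_vector"
  assumes "bounded A" and "z \<noteq> 0"
  shows "eventually (\<lambda>n. x - real n *\<^sub>R z \<notin> A) sequentially"
proof -
  obtain B where B: "\<And>a. a \<in> A \<Longrightarrow> norm a \<le> B"
    using assms(1) bounded_iff by blast
  obtain N :: nat where N: "real N > (B + norm x) / norm z"
    using reals_Archimedean2 by blast
  have "x - real n *\<^sub>R z \<notin> A" if "n \<ge> N" for n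
  proof
    assume "x - real n *\<^sub>R z \<in> A"
    then have "real n * norm z \<le> B + norm x"
      using B norm_triangle_ineq2[of "real n *\<^sub>R z" x] by (fastforce simp: norm_minus_commute)
    moreover have "B + norm x < real N * norm z"
      using N assms(2) by (simp add: divide_less_eq)
    moreover have "real N * norm z \<le> real n * norm z"
      using that by (simp add: mult_right_mono)
    ultimately show False by simp
  qed
  then show ?thesis by (rule eventually_sequentiallyI)
qed

lemma translate_chain_exit:
  fixes x z :: "'a::real_normed_vector"
  assumes "bounded A" and "z \<noteq> 0" and "x - z \<in> A"
  obtains n where "\<forall>j\<le>n. x - real (Suc j) *\<^sub>R z \<in> A" and "x - real (n + 2) *\<^sub>R z \<notin> A"
proof -
  obtain N where "\<forall>n\<ge>N. x - real n *\<^sub>R z \<notin> A"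
    using eventually_translates_leave_bounded[OF assms(1,2)] unfolding eventually_sequentially by blast
  then have "\<exists>k. x - real (k + 2) *\<^sub>R z \<notin> A" by (metis le_add1)
  then obtain n where n: "x - real (n + 2) *\<^sub>R z \<notin> A" and "\<forall>j<n. x - real (j + 2) *\<^sub>R z \<in> A"
    unfolding exists_least_iff[of "\<lambda>k. x - real (k + 2) *\<^sub>R z \<notin> A"] by blast
  moreover have "\<forall>j\<le>n. x - real (Suc j) *\<^sub>R z \<in> A"
  proof (intro allI impI)
    fix j assume "j \<le> n"
    with assms(3) \<open>\<forall>j<n. _\<close> show "x - real (Suc j) *\<^sub>R z \<in> A"
      by (cases j) (auto simp: add.commute)
  qed
  ultimately show thesis by (intro that)
qed

lemma convex_translate_chain_endpoint:
  fixes C A :: "'a::real_vector set"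
  assumes "convex C" and "A \<inter> C = {}" and "x \<in> C"
    and chain: "\<forall>j\<le>n. x - real (Suc j) *\<^sub>R z \<in> A" and exit: "x - real (n + 2) *\<^sub>R z \<notin> A"
  shows "x - real (Suc n) *\<^sub>R z \<in> A" and "x - real (Suc n) *\<^sub>R z - z \<notin> C \<union> A"
proof -
  show "x - real (Suc n) *\<^sub>R z \<in> A" using chain by simp
  have last: "x - real (Suc n) *\<^sub>R z - z = x - real (n + 2) *\<^sub>R z"
    by (simp add: algebra_simps scaleR_2)
  have "x - real (n + 2) *\<^sub>R z \<notin> C"
  proof
    assume "x - real (n + 2) *\<^sub>R z \<in> C"
    define t where "t = 1 / real (n + 2)"
    have "(1 - t) *\<^sub>R x + t *\<^sub>R (x - c *\<^sub>R z) = x - (t * c) *\<^sub>R z" for c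
      by (simp add: algebra_simps)
    from this[of "real (n + 2)"] have "x - z = (1 - t) *\<^sub>R x + t *\<^sub>R (x - real (n + 2) *\<^sub>R z)"
      by (simp add: t_def)
    also have "\<dots> \<in> C"
      using \<open>convex C\<close> \<open>x \<in> C\<close> \<open>x - real (n + 2) *\<^sub>R z \<in> C\<close> by (rule convexD) (auto simp: t_def)
    finally have "x - z \<in> C" .
    moreover have "x - z \<in> A" using chain by auto
    ultimately show False using \<open>A \<inter> C = {}\<close> by blast
  qed
  with exit show "x - real (Suc n) *\<^sub>R z - z \<notin> C \<union> A" unfolding last by blast
qed

lemma translate_chain_endpoints_distinct:
  fixes z :: "'a::real_vector"
  assumes "x \<notin> A" and chain: "\<forall>j\<le>m. x' - real (Suc j) *\<^sub>R z \<in> A" and "n < m"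
  shows "x - real (Suc n) *\<^sub>R z \<noteq> x' - real (Suc m) *\<^sub>R z"
proof
  assume eq: "x - real (Suc n) *\<^sub>R z = x' - real (Suc m) *\<^sub>R z"
  obtain j where j: "m = n + Suc j" using \<open>n < m\<close> less_iff_Suc_add by auto
  have "x = x' - real (Suc j) *\<^sub>R z"
    using eq j by (simp add: algebra_simps scaleR_2)
  moreover have "x' - real (Suc j) *\<^sub>R z \<in> A" using chain j by simp
  ultimately show False using \<open>x \<notin> A\<close> by simp
qed

lemma emeasure_lborel_translate:
  fixes S :: "'a::euclidean_space set"
  assumes "S \<in> sets borel"
  shows "emeasure lborel {x. x + c \<in> S} = emeasure lborel S"
proof -
  have "{x. x + c \<in> S} = (+) c -` S \<inter> space lborel" by (auto simp: add.commute)
  then show ?thesis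
    using emeasure_distr[of "(+) c" lborel borel S] assms by (simp add: lborel_distr_plus)
qed

lemma convex_overlap_le:
  fixes C A :: "'a::euclidean_space set"
  assumes [measurable]: "C \<in> sets borel" "A \<in> sets borel"
    and "convex C" and "bounded A" and disj: "A \<inter> C = {}"
  shows "overlap C A z \<le> overlap A (- (C \<union> A)) z"
proof (cases "z = 0")
  case True
  then have "C \<inter> {x. x - z \<in> A} = {}" using disj by auto
  then show ?thesis by (simp add: overlap_def)
next
  case False
  define Q where
    "Q n = {x \<in> C. (\<forall>j\<le>n. x - real (Suc j) *\<^sub>R z \<in> A) \<and> x - real (n + 2) *\<^sub>R z \<notin> A}" for n
  define T where "T n = {a. a + real (Suc n) *\<^sub>R z \<in> Q n}" for n
  have [measurable]: "Q n \<in> sets borel" "T n \<in> sets borel" for n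
    unfolding T_def Q_def by measurable
  have "C \<inter> {x. x - z \<in> A} \<subseteq> (\<Union>n. Q n)"
  proof
    fix x assume x: "x \<in> C \<inter> {x. x - z \<in> A}"
    with translate_chain_exit[OF \<open>bounded A\<close> False] obtain n
      where "\<forall>j\<le>n. x - real (Suc j) *\<^sub>R z \<in> A" and "x - real (n + 2) *\<^sub>R z \<notin> A" by blast
    with x show "x \<in> (\<Union>n. Q n)" by (auto simp: Q_def)
  qed
  moreover have "T n \<subseteq> A \<inter> {a. a - z \<in> - (C \<union> A)}" for n
  proof
    fix a assume "a \<in> T n"
    then have "a + real (Suc n) *\<^sub>R z \<in> Q n" by (simp add: T_def)
    from convex_translate_chain_endpoint[OF \<open>convex C\<close> disj, of "a + real (Suc n) *\<^sub>R z" n z]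
      this show "a \<in> A \<inter> {a. a - z \<in> - (C \<union> A)}"
      unfolding Q_def by simp
  qed
  moreover have "disjoint_family T"
  proof -
    have "T n \<inter> T m = {}" if "n < m" for n m
    proof (intro equals0I)
      fix a assume "a \<in> T n \<inter> T m"
      then have "a + real (Suc n) *\<^sub>R z \<in> Q n" and "a + real (Suc m) *\<^sub>R z \<in> Q m"
        by (simp_all add: T_def)
      then have "a + real (Suc n) *\<^sub>R z \<notin> A" and "\<forall>j\<le>m. a + real (Suc m) *\<^sub>R z - real (Suc j) *\<^sub>R z \<in> A"
        using disj unfolding Q_def by blast+
      from translate_chain_endpoints_distinct[OF this that] show False by simp
    qed
    then show ?thesis
      unfolding disjoint_family_on_def by (metis Int_commute linorder_neqE_nat)
  qed
  ultimately have "overlap C A z \<le> emeasure lborel (\<Union>n. Q n)"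
    and "emeasure lborel (\<Union>n. T n) \<le> overlap A (- (C \<union> A)) z"
    unfolding overlap_def by (auto intro!: emeasure_mono)
  moreover have "emeasure lborel (\<Union>n. Q n) \<le> emeasure lborel (\<Union>n. T n)"
  proof -
    have "emeasure lborel (\<Union>n. Q n) \<le> (\<Sum>n. emeasure lborel (Q n))"
      by (intro emeasure_subadditive_countably) auto
    also have "\<dots> = (\<Sum>n. emeasure lborel (T n))"
      by (simp add: T_def emeasure_lborel_translate)
    also have "\<dots> = emeasure lborel (\<Union>n. T n)"
      using \<open>disjoint_family T\<close> by (intro suminf_emeasure) auto
    finally show ?thesis .
  qed
  ultimately show ?thesis by (meson order_trans)
qed

lemma nn_integral_lborel_reflect:
  fixes f :: "'a::euclidean_space \<Rightarrow> ennreal"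
  assumes "f \<in> borel_measurable borel"
  shows "(\<integral>\<^sup>+y. f y \<partial>lborel) = (\<integral>\<^sup>+z. f (x - z) \<partial>lborel)"
proof -
  have "(\<integral>\<^sup>+y. f y \<partial>lborel)
      = (\<integral>\<^sup>+y. f y \<partial>density (distr lborel borel (\<lambda>z. x + (-1) *\<^sub>R z)) (\<lambda>_. \<bar>-1::real\<bar> ^ DIM('a)))"
    by (subst lborel_affine[of "-1" x]) simp_all
  also have "\<dots> = (\<integral>\<^sup>+z. f (x + (-1) *\<^sub>R z) \<partial>lborel)"
    using assms by (simp add: nn_integral_density nn_integral_distr)
  finally show ?thesis by simp
qed

lemma null_sets_lborel_reflect:
  fixes N :: "'a::euclidean_space set"
  assumes "N \<in> null_sets lborel"
  shows "{y. x - y \<in> N} \<in> null_sets lborel"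
proof -
  have [measurable]: "N \<in> sets borel" using assms by (simp add: null_sets_def)
  have "emeasure lborel {y. x - y \<in> N} = (\<integral>\<^sup>+z. indicator N (x - z) \<partial>lborel)"
    by (simp add: nn_integral_indicator[symmetric] indicator_def del: nn_integral_indicator)
  also have "\<dots> = emeasure lborel N"
    by (simp add: nn_integral_lborel_reflect[symmetric])
  finally show ?thesis using assms by (simp add: null_sets_def)
qed

lemma nn_integral_interaction_eq_overlap:
  fixes g :: "'a::euclidean_space \<Rightarrow> ennreal"
  assumes [measurable]: "X \<in> sets borel" "Y \<in> sets borel" "g' \<in> borel_measurable borel"
    and ae: "AE z in lborel. g z = g' z"
  shows "(\<integral>\<^sup>+x. indicator X x * (\<integral>\<^sup>+y. indicator Y y * g (x - y) \<partial>lebesgue) \<partial>lebesgue)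
       = (\<integral>\<^sup>+z. g' z * overlap X Y z \<partial>lborel)"
proof -
  have inner: "(\<integral>\<^sup>+y. indicator Y y * g (x - y) \<partial>lborel)
             = (\<integral>\<^sup>+z. indicator Y (x - z) * g' z \<partial>lborel)" for x
  proof -
    obtain N where N: "N \<in> null_sets lborel" "{z. g z \<noteq> g' z} \<subseteq> N"
      using ae by (auto simp: eventually_ae_filter)
    have "AE y in lborel. y \<notin> {y. x - y \<in> N}"
      using N(1) by (intro AE_not_in null_sets_lborel_reflect)
    then have "AE y in lborel. g (x - y) = g' (x - y)"
      by eventually_elim (use N(2) in auto)
    then have "(\<integral>\<^sup>+y. indicator Y y * g (x - y) \<partial>lborel)
             = (\<integral>\<^sup>+y. indicator Y y * g' (x - y) \<partial>lborel)"
      by (intro nn_integral_cong_AE) (auto elim!: eventually_mono)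
    also have "\<dots> = (\<integral>\<^sup>+z. indicator Y (x - z) * g' z \<partial>lborel)"
      by (subst nn_integral_lborel_reflect[where x = x]) simp_all
    finally show ?thesis .
  qed
  have slice: "(\<integral>\<^sup>+x. indicator X x * (indicator Y (x - z) * g' z) \<partial>lborel) = g' z * overlap X Y z" for z
  proof -
    have [measurable]: "X \<inter> {x. x - z \<in> Y} \<in> sets borel" by measurable
    have "(\<integral>\<^sup>+x. indicator X x * (indicator Y (x - z) * g' z) \<partial>lborel)
        = (\<integral>\<^sup>+x. g' z * indicator (X \<inter> {x. x - z \<in> Y}) x \<partial>lborel)"
      by (intro nn_integral_cong) (auto simp: indicator_def)
    also have "\<dots> = g' z * overlap X Y z"
      by (simp add: overlap_def nn_integral_cmult_indicator)
    finally show ?thesis .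
  qed
  have "(\<integral>\<^sup>+x. indicator X x * (\<integral>\<^sup>+y. indicator Y y * g (x - y) \<partial>lebesgue) \<partial>lebesgue)
      = (\<integral>\<^sup>+x. indicator X x * (\<integral>\<^sup>+z. indicator Y (x - z) * g' z \<partial>lborel) \<partial>lborel)"
    by (simp only: nn_integral_completion inner)
  also have "\<dots> = (\<integral>\<^sup>+x. (\<integral>\<^sup>+z. indicator X x * (indicator Y (x - z) * g' z) \<partial>lborel) \<partial>lborel)"
    by (intro nn_integral_cong nn_integral_cmult[symmetric]) measurable
  also have "\<dots> = (\<integral>\<^sup>+z. (\<integral>\<^sup>+x. indicator X x * (indicator Y (x - z) * g' z) \<partial>lborel) \<partial>lborel)"
    by (rule lborel_pair.Fubini'[symmetric]) measurable
  finally show ?thesis by (simp only: slice)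
qed

lemma perK_eq_nn_integral_overlap:
  fixes K :: "'a::euclidean_space \<Rightarrow> real"
  assumes [measurable]: "E \<in> sets borel" "\<Omega> \<in> sets borel" "g \<in> borel_measurable borel"
    and "AE z in lborel. ennreal (K z) = g z"
  shows "perK K E \<Omega> =
    (\<integral>\<^sup>+z. g z * (overlap E (\<Omega> - E) z + overlap (E \<inter> \<Omega>) (- (\<Omega> \<union> E)) z) \<partial>lborel)"
proof -
  have "perK K E \<Omega> = (\<integral>\<^sup>+z. g z * overlap E (\<Omega> - E) z \<partial>lborel)
                     + (\<integral>\<^sup>+z. g z * overlap (E \<inter> \<Omega>) (- (\<Omega> \<union> E)) z \<partial>lborel)"
    unfolding perK_def Compl_eq_Diff_UNIV
    by (subst (1 2) nn_integral_interaction_eq_overlap[where g'=g]) (use assms in simp_all)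
  also have "\<dots> = (\<integral>\<^sup>+z. g z * overlap E (\<Omega> - E) z + g z * overlap (E \<inter> \<Omega>) (- (\<Omega> \<union> E)) z \<partial>lborel)"
    by (rule nn_integral_add[symmetric]) (simp_all add: overlap_def)
  finally show ?thesis by (simp add: distrib_left)
qed

lemma overlap_Un_left:
  assumes [measurable]: "X \<in> sets borel" "X' \<in> sets borel" "Y \<in> sets borel"
    and "X \<inter> X' = {}"
  shows "overlap (X \<union> X') Y z = overlap X Y z + overlap X' Y z"
proof -
  have "(X \<union> X') \<inter> {x. x - z \<in> Y} = X \<inter> {x. x - z \<in> Y} \<union> X' \<inter> {x. x - z \<in> Y}" by blast
  then show ?thesis
    unfolding overlap_def using \<open>X \<inter> X' = {}\<close> by (subst plus_emeasure) auto
qed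

lemma overlap_Un_right:
  assumes [measurable]: "X \<in> sets borel" "Y \<in> sets borel" "Y' \<in> sets borel"
    and "Y \<inter> Y' = {}"
  shows "overlap X (Y \<union> Y') z = overlap X Y z + overlap X Y' z"
proof -
  have "X \<inter> {x. x - z \<in> Y \<union> Y'} = X \<inter> {x. x - z \<in> Y} \<union> X \<inter> {x. x - z \<in> Y'}" by blast
  then show ?thesis
    unfolding overlap_def using \<open>Y \<inter> Y' = {}\<close> by (subst plus_emeasure) auto
qed

lemma perK_integrand_le_Un_convex:
  fixes C A :: "'a::euclidean_space set"
  assumes [measurable]: "C \<in> sets borel" "A \<in> sets borel" "\<Omega> \<in> sets borel"
    and "convex C" and "bounded A" and "A \<inter> C = {}" and "A \<subseteq> \<Omega>"
  defines "F \<equiv> C \<union> A"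
  shows "overlap C (\<Omega> - C) z + overlap (C \<inter> \<Omega>) (- (\<Omega> \<union> C)) z
       \<le> overlap F (\<Omega> - F) z + overlap (F \<inter> \<Omega>) (- (\<Omega> \<union> F)) z"
proof -
  have [measurable]: "F \<in> sets borel" by (simp add: F_def)
  have outside: "- (\<Omega> \<union> C) = - (\<Omega> \<union> F)"
    using \<open>A \<subseteq> \<Omega>\<close> by (auto simp: F_def)
  have "\<Omega> - C = (\<Omega> - F) \<union> A"
    using assms(6,7) by (auto simp: F_def)
  then have C_split: "overlap C (\<Omega> - C) z = overlap C (\<Omega> - F) z + overlap C A z"
    by (simp only:) (rule overlap_Un_right; auto simp: F_def)
  have "- F = (\<Omega> - F) \<union> - (\<Omega> \<union> F)" by blast
  then have A_split: "overlap A (- F) z = overlap A (\<Omega> - F) z + overlap A (- (\<Omega> \<union> F)) z"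
    by (simp only:) (rule overlap_Un_right; auto)
  have F_left: "overlap F (\<Omega> - F) z = overlap C (\<Omega> - F) z + overlap A (\<Omega> - F) z"
    unfolding F_def by (rule overlap_Un_left) (use assms(6) in auto)
  have "F \<inter> \<Omega> = (C \<inter> \<Omega>) \<union> A"
    using \<open>A \<subseteq> \<Omega>\<close> by (auto simp: F_def)
  then have F_split: "overlap (F \<inter> \<Omega>) (- (\<Omega> \<union> F)) z
                  = overlap (C \<inter> \<Omega>) (- (\<Omega> \<union> F)) z + overlap A (- (\<Omega> \<union> F)) z"
    using assms(6) by (simp only:) (rule overlap_Un_left; auto)
  have "overlap C (\<Omega> - C) z + overlap (C \<inter> \<Omega>) (- (\<Omega> \<union> C)) z
      = overlap C (\<Omega> - F) z + overlap C A z + overlap (C \<inter> \<Omega>) (- (\<Omega> \<union> F)) z"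
    by (simp only: C_split outside)
  also have "\<dots> \<le> overlap C (\<Omega> - F) z + overlap A (- F) z + overlap (C \<inter> \<Omega>) (- (\<Omega> \<union> F)) z"
    using convex_overlap_le[of C A z] assms by (simp add: F_def add_mono)
  also have "\<dots> = overlap F (\<Omega> - F) z + overlap (F \<inter> \<Omega>) (- (\<Omega> \<union> F)) z"
    by (simp only: A_split F_split F_left add.assoc add.commute add.left_commute)
  finally show ?thesis .
qed

lemma perK_le_Un_convex:
  fixes K :: "'a::euclidean_space \<Rightarrow> real"
  assumes "K \<in> borel_measurable lebesgue"
    and [measurable]: "C \<in> sets borel" "A \<in> sets borel" "\<Omega> \<in> sets borel"
    and "convex C" and "bounded A" and "A \<inter> C = {}" and "A \<subseteq> \<Omega>"
  shows "perK K C \<Omega> \<le> perK K (C \<union> A) \<Omega>"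
proof -
  have "(\<lambda>z. ennreal (K z)) \<in> borel_measurable (completion lborel)"
    using measurable_compose[OF assms(1) measurable_ennreal] by simp
  then obtain g where "g \<in> borel_measurable lborel" and ae: "AE z in lborel. ennreal (K z) = g z"
    using completion_ex_borel_measurable by blast
  then have [measurable]: "g \<in> borel_measurable borel" by simp
  have "perK K C \<Omega>
      = (\<integral>\<^sup>+z. g z * (overlap C (\<Omega> - C) z + overlap (C \<inter> \<Omega>) (- (\<Omega> \<union> C)) z) \<partial>lborel)"
    by (rule perK_eq_nn_integral_overlap[OF _ _ _ ae]) simp_all
  also have "\<dots> \<le> (\<integral>\<^sup>+z. g z * (overlap (C \<union> A) (\<Omega> - (C \<union> A)) z
                       + overlap ((C \<union> A) \<inter> \<Omega>) (- (\<Omega> \<union> (C \<union> A))) z) \<partial>lborel)"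
    using assms by (intro nn_integral_mono mult_left_mono perK_integrand_le_Un_convex) simp_all
  also have "\<dots> = perK K (C \<union> A) \<Omega>"
    by (rule perK_eq_nn_integral_overlap[OF _ _ _ ae, symmetric]) simp_all
  finally show ?thesis .
qed

lemma perK_cong_null_sets:
  assumes "N \<in> null_sets lebesgue" and "E - E' \<subseteq> N" and "E' - E \<subseteq> N"
  shows "perK K E \<Omega> = perK K E' \<Omega>"
proof -
  have ae: "AE x in lebesgue. x \<notin> N" using assms(1) by (rule AE_not_in)
  have cong: "(\<integral>\<^sup>+y. indicator X y * f y \<partial>lebesgue) = (\<integral>\<^sup>+y. indicator X' y * f y \<partial>lebesgue)"
    if "\<And>y. y \<notin> N \<Longrightarrow> y \<in> X \<longleftrightarrow> y \<in> X'" for X X' f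
    using ae by (intro nn_integral_cong_AE) (auto elim!: eventually_mono simp: that indicator_def)
  have inner: "(\<integral>\<^sup>+y. indicator (\<Omega> - E) y * ennreal (K (x - y)) \<partial>lebesgue)
      = (\<integral>\<^sup>+y. indicator (\<Omega> - E') y * ennreal (K (x - y)) \<partial>lebesgue)"
    "(\<integral>\<^sup>+y. indicator (UNIV - (\<Omega> \<union> E)) y * ennreal (K (x - y)) \<partial>lebesgue)
      = (\<integral>\<^sup>+y. indicator (UNIV - (\<Omega> \<union> E')) y * ennreal (K (x - y)) \<partial>lebesgue)" for x
    using assms(2,3) by (auto intro!: cong)
  show ?thesis
    unfolding perK_def inner using assms(2,3) by (intro arg_cong2[where f="(+)"] cong) auto
qed

lemma perK_le_bounded_extension_convex:
  fixes K :: "'a::euclidean_space \<Rightarrow> real"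
  assumes "K \<in> borel_measurable lebesgue" and "C \<in> sets borel" and "convex C"
    and "\<Omega> \<in> sets borel" and "F \<in> sets lebesgue" and "C \<subseteq> F"
    and "bounded (F - C)" and "F - C \<subseteq> \<Omega>"
  shows "perK K C \<Omega> \<le> perK K F \<Omega>"
proof -
  obtain S N N' where F: "F = S \<union> N" and "N \<subseteq> N'" and N': "N' \<in> null_sets lborel"
    and "S \<in> sets borel"
    using sets_completionE[OF \<open>F \<in> sets lebesgue\<close>] by auto
  have "S - C \<subseteq> F - C" using F by blast
  then have "bounded (S - C)" and "S - C \<subseteq> \<Omega>"
    using assms(7,8) bounded_subset by blast+
  then have "perK K C \<Omega> \<le> perK K (C \<union> (S - C)) \<Omega>"
    using assms(1-4) \<open>S \<in> sets borel\<close> by (intro perK_le_Un_convex) auto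
  also have "\<dots> = perK K F \<Omega>"
    using null_sets_completionI[OF N'] \<open>N \<subseteq> N'\<close> \<open>C \<subseteq> F\<close> F
    by (intro perK_cong_null_sets) auto
  finally show ?thesis .
qed

theorem mainTheorem2:
  fixes K :: "'a::euclidean_space \<Rightarrow> real" and C :: "'a set" and R :: real
  assumes "admissible_kernel K" and "closed C" and "convex C" and "R > 0"
  shows "outward_minimizing K C (ball 0 R)"
  unfolding outward_minimizing_def
proof (intro allI impI, elim conjE)
  fix F assume "F \<in> sets lebesgue" "C \<subseteq> F" "compactly_contained (F - C) (ball 0 R)"
  then have "bounded (F - C)" and "F - C \<subseteq> ball 0 R"
    unfolding compactly_contained_def
    by (meson bounded_subset closure_subset compact_imp_bounded, meson closure_subset order_trans)
  with assms \<open>F \<in> sets lebesgue\<close> \<open>C \<subseteq> F\<close> show "perK K C (ball 0 R) \<le> perK K F (ball 0 R)"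
    by (intro perK_le_bounded_extension_convex) (auto simp: admissible_kernel_def)
qed
end
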